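(* For any integers $n\ge1$ and $k\ge1$ there exists a divisor $d\mid n$ with $d\le n^{1/2^k}$ such that \[ \tau(n)\le 2^{2^k-1}\tau(d)^{2^k}. \]
   Context: $\tau$ denotes the number-of-divisors function. *)

theory Defs
  imports Complex_Main
begin

definition tau :: "nat \<Rightarrow> nat" where
  "tau n = card {d. d dvd n}"

end

theory Submission
  imports Defs "HOL-Computational_Algebra.Primes"
begin

text \<open>
  Every \<open>n \<ge> 1\<close> factors as \<open>n = a b\<close> with \<open>\<tau>(a)\<close> and \<open>\<tau>(b)\<close> within a factor 2 of
  each other: split off a maximal prime power \<open>p\<^sup>e\<close>, balance the cofactor by induction,
  and give \<open>p\<^bsup>\<lceil>e/2\<rceil>\<^esup>\<close> to the factor with fewer divisors and \<open>p\<^bsup>\<lfloor>e/2\<rfloor>\<^esup>\<close> to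
  the other. The smaller factor \<open>d\<close> of such a splitting satisfies \<open>d \<le> \<surd>n\<close> and
  \<open>\<tau>(n) \<le> \<tau>(a) \<tau>(b) \<le> 2 \<tau>(d)\<^sup>2\<close>; applying this \<open>k\<close> times, each time to the divisor
  just found, yields the theorem.
\<close>

lemma divisors_mult_subset:
  "{d. d dvd x * y} \<subseteq> (\<lambda>(u, v). u * v) ` ({u. u dvd x} \<times> {v. v dvd (y :: nat)})"
proof
  fix d assume "d \<in> {d. d dvd x * y}"
  then obtain u v where "d = u * v" "u dvd x" "v dvd y"
    by (auto elim: dvd_productE)
  then show "d \<in> (\<lambda>(u, v). u * v) ` ({u. u dvd x} \<times> {v. v dvd y})"
    by force
qed

lemma tau_mult_le:
  fixes x y :: nat
  assumes "x > 0" "y > 0"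
  shows "tau (x * y) \<le> tau x * tau y"
proof -
  have "tau (x * y) \<le> card ((\<lambda>(u, v). u * v) ` ({u. u dvd x} \<times> {v. v dvd y}))"
    unfolding tau_def using assms divisors_mult_subset by (intro card_mono) auto
  also have "\<dots> \<le> card ({u. u dvd x} \<times> {v. v dvd y})"
    using assms by (intro card_image_le) auto
  also have "\<dots> = tau x * tau y"
    by (simp add: tau_def card_cartesian_product)
  finally show ?thesis .
qed

lemma tau_mult_coprime:
  fixes x y :: nat
  assumes "x > 0" "coprime x y"
  shows "tau (x * y) = tau x * tau y"
proof -
  have "inj_on (\<lambda>(u, v). u * v) ({u. u dvd x} \<times> {v. v dvd y})"
  proof (rule inj_onI, clarsimp)
    fix u v u' v'
    assume uv: "u dvd x" "v dvd y" "u' dvd x" "v' dvd y" and eq: "u * v = u' * v'"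
    have "u dvd u'"
      using eq coprime_divisors[OF uv(1,4) assms(2)]
      by (metis coprime_dvd_mult_left_iff dvd_triv_left)
    moreover have "u' dvd u"
      using eq coprime_divisors[OF uv(3,2) assms(2)]
      by (metis coprime_dvd_mult_left_iff dvd_triv_left)
    ultimately have "u = u'"
      by (rule dvd_antisym)
    moreover have "u > 0"
      using uv(1) assms(1) by (auto intro: gr0I)
    ultimately show "u = u' \<and> v = v'"
      using eq by simp
  qed
  moreover have "{d. d dvd x * y} = (\<lambda>(u, v). u * v) ` ({u. u dvd x} \<times> {v. v dvd y})"
    using divisors_mult_subset by (auto intro: mult_dvd_mono)
  ultimately show ?thesis
    by (simp add: tau_def card_image card_cartesian_product)
qed

lemma tau_prime_power:
  assumes "prime (p :: nat)"
  shows "tau (p ^ i) = i + 1"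
proof -
  have "{d. d dvd p ^ i} = (\<lambda>j. p ^ j) ` {0..i}"
    using divides_primepow_nat[OF assms] by auto
  moreover have "inj_on (\<lambda>j. p ^ j) {0..i}"
    using prime_gt_1_nat[OF assms] by (auto intro!: inj_onI)
  ultimately show ?thesis
    unfolding tau_def by (simp add: card_image)
qed

lemma tau_mult_prime_power:
  fixes a p :: nat
  assumes "prime p" "\<not> p dvd a" "a > 0"
  shows "tau (a * p ^ i) = tau a * (i + 1)"
proof -
  have "coprime (p ^ i) a"
    using assms(1,2) by (simp add: prime_imp_coprime)
  then show ?thesis
    using assms tau_mult_coprime tau_prime_power by (simp add: coprime_commute)
qed

lemma balanced_products:
  fixes A B I J :: nat
  assumes "A \<le> B" "B \<le> 2 * A" "I \<le> J" "J \<le> 2 * I"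
  shows "A * J \<le> 2 * (B * I)" and "B * I \<le> 2 * (A * J)"
proof -
  have "A * J \<le> B * (2 * I)" using assms(1,4) by (rule mult_le_mono)
  then show "A * J \<le> 2 * (B * I)" by simp
  have "B * I \<le> (2 * A) * J" using assms(2,3) by (rule mult_le_mono)
  then show "B * I \<le> 2 * (A * J)" by simp
qed

lemma balanced_factorization:
  fixes n :: nat
  assumes "n \<ge> 1"
  shows "\<exists>a b. a * b = n \<and> tau a \<le> 2 * tau b \<and> tau b \<le> 2 * tau a"
  using assms
proof (induction n rule: less_induct)
  case (less n)
  show ?case
  proof (cases "n = 1")
    case True
    then show ?thesis by (intro exI[of _ 1]) simp
  next
    case False
    then obtain p where p: "prime p" "p dvd n"
      using prime_factor_nat by blast
    define e where "e = multiplicity p n"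
    have "n \<noteq> 0" "\<not> is_unit p"
      using less.prems p(1) by auto
    then obtain y where y: "n = p ^ e * y" "\<not> p dvd y"
      using multiplicity_decompose'[of n p] unfolding e_def by blast
    have "e \<ge> 1"
      unfolding e_def using p less.prems by (simp add: prime_multiplicity_gt_zero_iff Suc_le_eq)
    then have "p ^ e > 1"
      using prime_gt_1_nat[OF p(1)] by (intro one_less_power) auto
    moreover have "y > 0"
      using y less.prems by (cases "y = 0") auto
    ultimately have "y < n"
      using y(1) by simp
    then obtain a b where ab: "a * b = y" "tau a \<le> 2 * tau b" "tau b \<le> 2 * tau a"
      using less.IH \<open>y > 0\<close> by fastforce
    have "\<not> p dvd a" "\<not> p dvd b" "a > 0" "b > 0"
      using y(2) ab(1) \<open>y > 0\<close> by auto
    then have tau_a: "tau (a * p ^ m) = tau a * (m + 1)"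
          and tau_b: "tau (b * p ^ m) = tau b * (m + 1)" for m
      using p(1) tau_mult_prime_power by auto
    define i where "i = e div 2"
    define j where "j = e - i"
    have exps: "i + 1 \<le> j + 1" "j + 1 \<le> 2 * (i + 1)"
      unfolding i_def j_def by auto
    have n_ij: "(a * p ^ i) * (b * p ^ j) = n" and n_ji: "(a * p ^ j) * (b * p ^ i) = n"
      using y(1) ab(1) by (auto simp: i_def j_def ac_simps power_add[symmetric])
    consider "tau a \<le> tau b" | "tau b \<le> tau a"
      by linarith
    then show ?thesis
    proof cases
      case 1
      with balanced_products[OF 1 ab(3) exps] n_ji
      show ?thesis
        by (intro exI[of _ "a * p ^ j"] exI[of _ "b * p ^ i"]) (simp add: tau_a tau_b ac_simps)
    next
      case 2
      with balanced_products[OF 2 ab(2) exps] n_ij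
      show ?thesis
        by (intro exI[of _ "a * p ^ i"] exI[of _ "b * p ^ j"]) (simp add: tau_a tau_b ac_simps)
    qed
  qed
qed

lemma divisor_below_sqrt_tau_bound:
  fixes n :: nat
  assumes "n \<ge> 1"
  shows "\<exists>d. d dvd n \<and> d * d \<le> n \<and> tau n \<le> 2 * tau d ^ 2"
proof -
  obtain a b where ab: "a * b = n" "tau a \<le> 2 * tau b" "tau b \<le> 2 * tau a"
    using balanced_factorization[OF assms] by blast
  then have "a > 0" "b > 0"
    using assms by auto
  then have tau_n: "tau n \<le> tau a * tau b"
    using tau_mult_le ab(1) by blast
  show ?thesis
  proof (cases "a \<le> b")
    case True
    have "tau n \<le> tau a * (2 * tau a)"
      using tau_n ab(3) by (meson le_trans mult_le_mono2)
    then have "tau n \<le> 2 * tau a ^ 2"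
      by (simp add: power2_eq_square)
    then show ?thesis
      using True ab(1) by (intro exI[of _ a]) auto
  next
    case False
    have "tau n \<le> (2 * tau b) * tau b"
      using tau_n ab(2) by (meson le_trans mult_le_mono1)
    then have "tau n \<le> 2 * tau b ^ 2"
      by (simp add: power2_eq_square)
    then show ?thesis
      using False ab(1) by (intro exI[of _ b]) auto
  qed
qed

lemma divisor_below_root_tau_bound:
  fixes n k :: nat
  assumes "n \<ge> 1"
  shows "\<exists>d. d dvd n \<and> real d \<le> real n powr (1 / 2 ^ k) \<and>
             tau n \<le> 2 ^ (2 ^ k - 1) * tau d ^ (2 ^ k)"
proof (induction k)
  case 0
  then show ?case by (intro exI[of _ n]) auto
next
  case (Suc k)
  then obtain d where d: "d dvd n" "real d \<le> real n powr (1 / 2 ^ k)"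
    "tau n \<le> 2 ^ (2 ^ k - 1) * tau d ^ (2 ^ k)"
    by blast
  have "d \<ge> 1"
    using d(1) assms by (cases "d = 0") auto
  then obtain d' where d': "d' dvd d" "d' * d' \<le> d" "tau d \<le> 2 * tau d' ^ 2"
    using divisor_below_sqrt_tau_bound by blast
  have "real d' = sqrt (real (d' * d'))"
    by simp
  also have "\<dots> \<le> sqrt (real n powr (1 / 2 ^ k))"
    using d'(2) d(2) by (simp del: of_nat_mult add: of_nat_le_iff[symmetric])
  also have "\<dots> = real n powr (1 / 2 ^ Suc k)"
    by (simp add: powr_half_sqrt[symmetric] powr_powr mult.commute)
  finally have "real d' \<le> real n powr (1 / 2 ^ Suc k)" .
  moreover have "tau n \<le> 2 ^ (2 ^ k - 1) * (2 * tau d' ^ 2) ^ 2 ^ k"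
    using d(3) d'(3) by (meson le_trans mult_le_mono2 power_mono zero_le)
  moreover have "(2::nat) ^ (2 ^ k - 1) * (2 * tau d' ^ 2) ^ 2 ^ k
                 = 2 ^ (2 ^ Suc k - 1) * tau d' ^ 2 ^ Suc k"
  proof -
    have "2 ^ k - 1 + 2 ^ k = (2::nat) ^ Suc k - 1"
      using one_le_power[of 2 k] by simp
    then show ?thesis
      by (simp add: power_mult_distrib power_mult power_add[symmetric] mult.commute)
  qed
  ultimately show ?case
    using d(1) d'(1) dvd_trans by metis
qed

theorem mainTheorem6:
  fixes n k :: nat
  assumes "n \<ge> 1" and "k \<ge> 1"
  shows "\<exists>d. d dvd n \<and> real d \<le> real n powr (1 / 2 ^ k) \<and>
             tau n \<le> 2 ^ (2 ^ k - 1) * tau d ^ (2 ^ k)"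
  using divisor_below_root_tau_bound[OF assms(1)] .

end
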